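(* For every subgroup $H\le G_{d,k}$, the multicomplex $\widetilde{\mathfrak X}_{d,k}(H)$ is link-connected.
   Context: Fix $d,k\ge1$, $[\![d]\!]=\{0,\dots,d\}$. $G_{d,k}=\langle\alpha_0,\dots,\alpha_d\mid\alpha_i^k=e\rangle$; for $J\subseteq[\![d]\!]$, $K_J=\langle\alpha_j:j\in J\rangle$, $\widehat J=[\![d]\!]\setminus J$, $\widehat i=\widehat{\{i\}}$. For $H\le G_{d,k}$, $g\in G_{d,k}$, $J\subseteq[\![d]\!]$ write $[K_{\widehat J}g]_H=\{K_{\widehat J}gh:h\in H\}$. The multicomplex $\widetilde{\mathfrak X}_{d,k}(H)$: its multicells of dimension $|J|-1$ are the classes $[K_{\widehat J}g]_H$ (for $J=[\![d]\!]$ these are the $[g]_H$, identified with left cosets $gH$); $[K_{\widehat J}g]_H$ lies over the cell $\Phi([K_{\widehat J}g]_H)=\{[K_{\widehat i}g]_H:i\in J\}$ (well defined), the underlying simplicial complex $\mathfrak X_{d,k}(H)$ consists of all such cells, and the multiplicity of a cell $\sigma$ is $|\Phi^{-1}(\sigma)|$; containment is $[K_{\widehat I}g]_H\preceq[K_{\widehat J}g]_H$ for $I\subseteq J$ (so the boundary multicells of $[K_{\widehat J}g]_H$ are the $[K_{\widehat{J\setminus\{l\}}}g]_H$, $l\in J$). A multicomplex is link-connected if for every multicell $\mathfrak a$ of dimension $j\le d-2$ (including the empty multicell, $j=-1$) the multigraph whose vertices are the $(j+1)$-multicells containing $\mathfrak a$ and whose edges are the $(j+2)$-multicells containing $\mathfrak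 a$ (each joining the two $(j+1)$-multicells containing $\mathfrak a$ that it contains) is connected. *)

theory Defs
  imports "HOL-Algebra.Algebra"
begin

text \<open>Elements are represented as equivalence classes of words over the letters 0..d
  (letter i standing for alpha_i). Since alpha_i^k = e, every element is a positive
  word; the group is the monoid presented by the relations alpha_i^k = e, i.e. words
  modulo inserting/deleting k consecutive copies of one letter.\<close>

definition words :: "nat \<Rightarrow> nat list set" where
  "words d = {w. set w \<subseteq> {0..d}}"

definition wstep :: "nat \<Rightarrow> nat \<Rightarrow> (nat list \<times> nat list) set" where
  "wstep d k = {(xs @ replicate k i @ ys, xs @ ys) | xs ys i.
                  i \<le> d \<and> xs \<in> words d \<and> ys \<in> words d}"

definition weq :: "nat \<Rightarrow> nat \<Rightarrow> (nat list \<times> nat list) set" where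
  "weq d k = (wstep d k \<union> (wstep d k)\<inverse>)\<^sup>* \<inter> (words d \<times> words d)"

definition Gdk :: "nat \<Rightarrow> nat \<Rightarrow> nat list set monoid" where
  "Gdk d k = \<lparr>carrier = words d // weq d k,
              monoid.mult = (\<lambda>A B. \<Union>a\<in>A. \<Union>b\<in>B. weq d k `` {a @ b}),
              monoid.one = weq d k `` {[]}\<rparr>"

definition alpha :: "nat \<Rightarrow> nat \<Rightarrow> nat \<Rightarrow> nat list set" where
  "alpha d k i = weq d k `` {[i]}"

definition Kgen :: "nat \<Rightarrow> nat \<Rightarrow> nat set \<Rightarrow> nat list set set" where
  "Kgen d k J = generate (Gdk d k) (alpha d k ` J)"

definition hatJ :: "nat \<Rightarrow> nat set \<Rightarrow> nat set" where
  "hatJ d J = {0..d} - J"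

definition mcls :: "nat \<Rightarrow> nat \<Rightarrow> nat list set set \<Rightarrow> nat set \<Rightarrow> nat list set
                     \<Rightarrow> nat list set set set" where
  "mcls d k H J g = (\<lambda>h. r_coset (Gdk d k) (Kgen d k (hatJ d J)) (g \<otimes>\<^bsub>Gdk d k\<^esub> h)) ` H"

text \<open>Multicells are labelled by their type J (dimension |J| - 1).\<close>
definition multicells :: "nat \<Rightarrow> nat \<Rightarrow> nat list set set
                          \<Rightarrow> (nat set \<times> nat list set set set) set" where
  "multicells d k H = {(J, mcls d k H J g) | J g. J \<subseteq> {0..d} \<and> g \<in> carrier (Gdk d k)}"

definition mc_le :: "nat \<Rightarrow> nat \<Rightarrow> nat list set set
      \<Rightarrow> (nat set \<times> nat list set set set) \<Rightarrow> (nat set \<times> nat list set set set) \<Rightarrow> bool" where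
  "mc_le d k H a b \<longleftrightarrow> (\<exists>I J g. I \<subseteq> J \<and> J \<subseteq> {0..d} \<and> g \<in> carrier (Gdk d k) \<and>
        a = (I, mcls d k H I g) \<and> b = (J, mcls d k H J g))"

definition mdim :: "(nat set \<times> 'b) \<Rightarrow> int" where
  "mdim a = int (card (fst a)) - 1"

definition link_connected ::
  "'c set \<Rightarrow> ('c \<Rightarrow> 'c \<Rightarrow> bool) \<Rightarrow> ('c \<Rightarrow> int) \<Rightarrow> int \<Rightarrow> bool" where
  "link_connected M cle dm n \<longleftrightarrow>
     (\<forall>a\<in>M. dm a \<le> n - 2 \<longrightarrow>
        (let V = {b\<in>M. dm b = dm a + 1 \<and> cle a b};
             E = {c\<in>M. dm c = dm a + 2 \<and> cle a c};
             adj = (\<lambda>u v. u \<in> V \<and> v \<in> V \<and> (\<exists>c\<in>E. cle u c \<and> cle v c))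
         in \<forall>u\<in>V. \<forall>v\<in>V. adj\<^sup>*\<^sup>* u v))"

definition Xtilde_link_connected :: "nat \<Rightarrow> nat \<Rightarrow> nat list set set \<Rightarrow> bool" where
  "Xtilde_link_connected d k H \<longleftrightarrow>
     link_connected (multicells d k H) (mc_le d k H) mdim (int d)"

end

theory Submission
  imports Defs
begin

(*
  Write \hat J for the complement of J in {0..d}. Let a = [K_{\hat J} g]_H with |\hat J| >= 2.
  The vertices of its link are v_i(x) = [K_{\hat{J+i}} x g]_H for i in \hat J and x in K_{\hat J},
  and v_i(x), v_j(x) are joined by the multicell over J + {i, j}.  Moreover v_j(z x) = v_j(x) for
  z in K_{\hat{J+j}}, and each generator alpha_l of K_{\hat J} lies in K_{\hat{J+j}} for some
  j in \hat J other than l.  Hence for z = alpha_l or its inverse every v_i(z x) is joined to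
  v_j(z x) = v_j(x), and induction on words in the generators connects all vertices.
*)

subsection \<open>The group \<open>G\<^sub>d\<^sub>,\<^sub>k\<close>\<close>

lemma words_append [simp]: "xs @ ys \<in> words d \<longleftrightarrow> xs \<in> words d \<and> ys \<in> words d"
  by (auto simp: words_def)

lemma words_Nil [simp]: "[] \<in> words d"
  by (simp add: words_def)

lemma words_Cons [simp]: "x # xs \<in> words d \<longleftrightarrow> x \<le> d \<and> xs \<in> words d"
  by (auto simp: words_def)

lemma replicate_in_words: "i \<le> d \<Longrightarrow> replicate n i \<in> words d"
  by (auto simp: words_def)

abbreviation wsym :: "nat \<Rightarrow> nat \<Rightarrow> (nat list \<times> nat list) set" where
  "wsym d k \<equiv> wstep d k \<union> (wstep d k)\<inverse>"

lemma wstep_append: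
  assumes "(x, y) \<in> wstep d k" "b \<in> words d"
  shows "(x @ b, y @ b) \<in> wstep d k" "(b @ x, b @ y) \<in> wstep d k"
proof -
  from assms(1) obtain xs ys i where xy: "x = xs @ replicate k i @ ys" "y = xs @ ys"
    and wd: "i \<le> d" "xs \<in> words d" "ys \<in> words d"
    by (auto simp: wstep_def)
  show "(x @ b, y @ b) \<in> wstep d k"
    unfolding wstep_def using xy wd assms(2) by (intro CollectI exI[of _ xs] exI[of _ "ys @ b"] exI[of _ i]) simp
  show "(b @ x, b @ y) \<in> wstep d k"
    unfolding wstep_def using xy wd assms(2) by (intro CollectI exI[of _ "b @ xs"] exI[of _ ys] exI[of _ i]) simp
qed

lemma wsym_rtrancl_append:
  assumes "(x, y) \<in> (wsym d k)\<^sup>*" "b \<in> words d"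
  shows "(x @ b, y @ b) \<in> (wsym d k)\<^sup>*" "(b @ x, b @ y) \<in> (wsym d k)\<^sup>*"
  using assms(1)
proof (induction rule: rtrancl_induct)
  case (step y z)
  from step(2) have "(y @ b, z @ b) \<in> wsym d k" "(b @ y, b @ z) \<in> wsym d k"
    using wstep_append[OF _ assms(2)] by blast+
  with step(3,4) show "(x @ b, z @ b) \<in> (wsym d k)\<^sup>*" "(b @ x, b @ z) \<in> (wsym d k)\<^sup>*"
    by (meson rtrancl.rtrancl_into_rtrancl)+
qed simp_all

lemma equiv_weq: "equiv (words d) (weq d k)"
proof (rule equivI)
  have "sym ((wsym d k)\<^sup>*)"
    by (rule sym_rtrancl) (auto simp: sym_def)
  then show "sym (weq d k)"
    unfolding weq_def sym_def by blast
  show "trans (weq d k)"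
    unfolding weq_def trans_def using rtrancl_trans[of _ _ "wsym d k"] by blast
qed (auto simp: weq_def refl_on_def)

lemma weq_append:
  assumes "(a, a') \<in> weq d k" "(b, b') \<in> weq d k"
  shows "(a @ b, a' @ b') \<in> weq d k"
proof -
  have "(a @ b, a' @ b) \<in> (wsym d k)\<^sup>*" "(a' @ b, a' @ b') \<in> (wsym d k)\<^sup>*"
    using assms wsym_rtrancl_append unfolding weq_def by blast+
  then show ?thesis
    using assms unfolding weq_def by (auto intro: rtrancl_trans)
qed

lemma Gdk_mult_classes:
  assumes "a \<in> words d" "b \<in> words d"
  shows "weq d k `` {a} \<otimes>\<^bsub>Gdk d k\<^esub> weq d k `` {b} = weq d k `` {a @ b}"
proof -
  have "weq d k `` {a' @ b'} = weq d k `` {a @ b}"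
    if "a' \<in> weq d k `` {a}" "b' \<in> weq d k `` {b}" for a' b'
    using that weq_append[of a a' d k b b'] equiv_class_eq[OF equiv_weq] by blast
  then have "(\<Union>a'\<in>weq d k `` {a}. \<Union>b'\<in>weq d k `` {b}. weq d k `` {a' @ b'})
      = (\<Union>a'\<in>weq d k `` {a}. \<Union>b'\<in>weq d k `` {b}. weq d k `` {a @ b})"
    by (intro SUP_cong refl) simp
  also have "\<dots> = weq d k `` {a @ b}"
    using assms equiv_class_self[OF equiv_weq] by blast
  finally show ?thesis
    unfolding Gdk_def by simp
qed

text \<open>Since \<open>\<alpha>\<^sub>i\<^sup>k = e\<close>, the inverse of a word is the reversed word with every letter
  raised to the power \<open>k - 1\<close>.\<close>

definition inv_word :: "nat \<Rightarrow> nat list \<Rightarrow> nat list" where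
  "inv_word k a = concat (map (replicate (k - 1)) (rev a))"

lemma inv_word_in_words: "a \<in> words d \<Longrightarrow> inv_word k a \<in> words d"
  by (auto simp: inv_word_def words_def)

lemma inv_word_append_cancel:
  assumes "k \<ge> 1" "a \<in> words d"
  shows "(inv_word k a @ a, []) \<in> (wsym d k)\<^sup>*"
  using assms(2)
proof (induction a)
  case (Cons x a)
  have "replicate (k - 1) x @ x # a = replicate k x @ a"
    using assms(1) by (cases k) (simp_all add: replicate_app_Cons_same)
  then have "inv_word k (x # a) @ x # a = inv_word k a @ replicate k x @ a"
    by (simp add: inv_word_def)
  moreover have "(inv_word k a @ replicate k x @ a, inv_word k a @ a) \<in> wstep d k"
    using Cons.prems inv_word_in_words[of a d k] unfolding wstep_def by auto
  ultimately show ?case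
    using Cons by (metis UnI1 converse_rtrancl_into_rtrancl words_Cons)
qed (simp add: inv_word_def)

lemma group_Gdk:
  assumes "k \<ge> 1"
  shows "group (Gdk d k)"
proof (rule groupI)
  have carrier: "carrier (Gdk d k) = words d // weq d k"
    and one: "\<one>\<^bsub>Gdk d k\<^esub> = weq d k `` {[]}"
    by (simp_all add: Gdk_def)
  have class_of: "\<exists>a \<in> words d. x = weq d k `` {a}" if "x \<in> carrier (Gdk d k)" for x
    using that unfolding carrier by (auto elim: quotientE)
  show "\<one>\<^bsub>Gdk d k\<^esub> \<in> carrier (Gdk d k)"
    unfolding carrier one by (rule quotientI) simp
  fix x y z
  assume "x \<in> carrier (Gdk d k)"
  then obtain a where a: "a \<in> words d" "x = weq d k `` {a}"
    using class_of by blast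
  show "\<one>\<^bsub>Gdk d k\<^esub> \<otimes>\<^bsub>Gdk d k\<^esub> x = x"
    unfolding one a(2) by (simp add: Gdk_mult_classes a)
  have "(inv_word k a @ a, []) \<in> weq d k"
    using inv_word_append_cancel[OF assms a(1)] inv_word_in_words[OF a(1)] a(1)
    by (simp add: weq_def)
  then have "weq d k `` {inv_word k a} \<otimes>\<^bsub>Gdk d k\<^esub> x = \<one>\<^bsub>Gdk d k\<^esub>"
    unfolding one a(2)
    by (simp add: Gdk_mult_classes a inv_word_in_words equiv_class_eq[OF equiv_weq])
  moreover have "weq d k `` {inv_word k a} \<in> carrier (Gdk d k)"
    unfolding carrier by (rule quotientI) (simp add: inv_word_in_words a)
  ultimately show "\<exists>y \<in> carrier (Gdk d k). y \<otimes>\<^bsub>Gdk d k\<^esub> x = \<one>\<^bsub>Gdk d k\<^esub>"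
    by blast
  assume "y \<in> carrier (Gdk d k)" "z \<in> carrier (Gdk d k)"
  then obtain b c where b: "b \<in> words d" "y = weq d k `` {b}"
    and c: "c \<in> words d" "z = weq d k `` {c}"
    using class_of by blast
  show "x \<otimes>\<^bsub>Gdk d k\<^esub> y \<in> carrier (Gdk d k)"
    unfolding a(2) b(2) carrier by (simp add: Gdk_mult_classes a b quotientI)
  show "x \<otimes>\<^bsub>Gdk d k\<^esub> y \<otimes>\<^bsub>Gdk d k\<^esub> z = x \<otimes>\<^bsub>Gdk d k\<^esub> (y \<otimes>\<^bsub>Gdk d k\<^esub> z)"
    unfolding a(2) b(2) c(2) by (simp add: Gdk_mult_classes a b c)
qed

lemma alpha_in_carrier: "i \<le> d \<Longrightarrow> alpha d k i \<in> carrier (Gdk d k)"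
  unfolding alpha_def Gdk_def by (auto intro: quotientI)

lemma subgroup_Kgen:
  assumes "k \<ge> 1" "I \<subseteq> {0..d}"
  shows "subgroup (Kgen d k I) (Gdk d k)"
  unfolding Kgen_def
  by (rule group.generate_is_subgroup[OF group_Gdk[OF assms(1)]])
    (use alpha_in_carrier assms(2) in auto)

lemma alpha_in_Kgen:
  assumes "i \<in> I"
  shows "alpha d k i \<in> Kgen d k I" "inv\<^bsub>Gdk d k\<^esub> alpha d k i \<in> Kgen d k I"
  unfolding Kgen_def using assms by (auto intro: generate.incl generate.inv)

subsection \<open>Orbits of right cosets\<close>

definition rcoset_orbit :: "('a, 'b) monoid_scheme \<Rightarrow> 'a set \<Rightarrow> 'a set \<Rightarrow> 'a \<Rightarrow> 'a set set" where
  "rcoset_orbit G K H g = (\<lambda>h. K #>\<^bsub>G\<^esub> (g \<otimes>\<^bsub>G\<^esub> h)) ` H"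

lemma mcls_eq_rcoset_orbit: "mcls d k H J g = rcoset_orbit (Gdk d k) (Kgen d k (hatJ d J)) H g"
  by (simp add: mcls_def rcoset_orbit_def)

lemma rcoset_orbit_eq_image_lcos: "rcoset_orbit G K H g = (\<lambda>y. K #>\<^bsub>G\<^esub> y) ` (g <#\<^bsub>G\<^esub> H)"
  by (auto simp: rcoset_orbit_def l_coset_def)

lemma (in group) rcoset_orbit_mult_right:
  assumes "subgroup H G" "g \<in> carrier G" "h \<in> H"
  shows "rcoset_orbit G K H (g \<otimes> h) = rcoset_orbit G K H g"
proof -
  have "(g \<otimes> h) <# H = g <# (h <# H)"
    using assms by (simp add: lcos_m_assoc subgroup.subset subgroup.mem_carrier)
  also have "h <# H = H"
    using assms by (simp add: coset_join3 subgroup.mem_carrier)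
  finally show ?thesis
    by (simp add: rcoset_orbit_eq_image_lcos)
qed

lemma (in group) rcoset_orbit_mult_left:
  assumes "subgroup K G" "H \<subseteq> carrier G" "x \<in> K" "g \<in> carrier G"
  shows "rcoset_orbit G K H (x \<otimes> g) = rcoset_orbit G K H g"
  unfolding rcoset_orbit_def
proof (rule image_cong[OF refl])
  fix h assume "h \<in> H"
  then have "h \<in> carrier G"
    using assms(2) by blast
  moreover have x: "x \<in> carrier G"
    using assms by (simp add: subgroup.mem_carrier)
  ultimately have "K #> (x \<otimes> g \<otimes> h) = (K #> x) #> (g \<otimes> h)"
    using assms by (simp add: coset_mult_assoc m_assoc subgroup.subset)
  also have "K #> x = K"
    using assms x by (simp add: coset_join2)
  finally show "K #> (x \<otimes> g \<otimes> h) = K #> (g \<otimes> h)" .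
qed

lemma (in group) rcoset_orbit_eqD:
  assumes "subgroup K G" "subgroup H G" "g' \<in> carrier G" "g \<in> carrier G"
    and "rcoset_orbit G K H g' = rcoset_orbit G K H g"
  shows "\<exists>x \<in> K. \<exists>h \<in> H. g' = x \<otimes> g \<otimes> h"
proof -
  have "K #> g' \<in> rcoset_orbit G K H g'"
    unfolding rcoset_orbit_def using assms(3) subgroup.one_closed[OF assms(2)]
    by (auto intro!: image_eqI[of _ _ \<one>])
  then have "K #> g' \<in> rcoset_orbit G K H g"
    using assms(5) by simp
  then obtain h where h: "h \<in> H" "K #> g' = K #> (g \<otimes> h)"
    unfolding rcoset_orbit_def by blast
  have "g' \<in> K #> (g \<otimes> h)"
    using rcos_self[OF assms(3,1)] h(2) by simp
  then obtain x where "x \<in> K" "g' = x \<otimes> (g \<otimes> h)"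
    unfolding r_coset_def by blast
  with h(1) assms show ?thesis
    by (metis m_assoc subgroup.mem_carrier)
qed

subsection \<open>Induction over a generated subgroup\<close>

lemma (in group) generate_induct_left [consumes 2, case_names one gen inv_gen]:
  assumes "x \<in> generate G S" "S \<subseteq> carrier G"
    and "P \<one>"
    and "\<And>s y. s \<in> S \<Longrightarrow> y \<in> generate G S \<Longrightarrow> P y \<Longrightarrow> P (s \<otimes> y)"
    and "\<And>s y. s \<in> S \<Longrightarrow> y \<in> generate G S \<Longrightarrow> P y \<Longrightarrow> P (inv s \<otimes> y)"
  shows "P x"
proof -
  have "\<forall>y \<in> generate G S. P y \<longrightarrow> P (x \<otimes> y)"
    using assms(1)
  proof (induction rule: generate.induct)
    case one
    then show ?case
      using generate_in_carrier[OF assms(2)] by simp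
  next
    case (eng h1 h2)
    have "h2 \<otimes> y \<in> generate G S" if "y \<in> generate G S" for y
      using that eng.hyps(2) generate_is_subgroup[OF assms(2)] by (simp add: subgroup.m_closed)
    with eng.IH show ?case
      using eng.hyps generate_in_carrier[OF assms(2)] by (simp add: m_assoc)
  qed (use assms(4,5) in blast)+
  then show ?thesis
    using assms(1,3) generate.one generate_in_carrier[OF assms(2)] by force
qed

subsection \<open>Links in an abstract multicomplex\<close>

definition link_vertices :: "'c set \<Rightarrow> ('c \<Rightarrow> 'c \<Rightarrow> bool) \<Rightarrow> ('c \<Rightarrow> int) \<Rightarrow> 'c \<Rightarrow> 'c set" where
  "link_vertices M cle dm a = {b \<in> M. dm b = dm a + 1 \<and> cle a b}"

definition link_edges :: "'c set \<Rightarrow> ('c \<Rightarrow> 'c \<Rightarrow> bool) \<Rightarrow> ('c \<Rightarrow> int) \<Rightarrow> 'c \<Rightarrow> 'c set" where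
  "link_edges M cle dm a = {c \<in> M. dm c = dm a + 2 \<and> cle a c}"

definition link_adj :: "'c set \<Rightarrow> ('c \<Rightarrow> 'c \<Rightarrow> bool) \<Rightarrow> ('c \<Rightarrow> int) \<Rightarrow> 'c \<Rightarrow> 'c \<Rightarrow> 'c \<Rightarrow> bool" where
  "link_adj M cle dm a u v \<longleftrightarrow> u \<in> link_vertices M cle dm a \<and> v \<in> link_vertices M cle dm a \<and>
     (\<exists>c \<in> link_edges M cle dm a. cle u c \<and> cle v c)"

lemma link_connected_iff:
  "link_connected M cle dm n \<longleftrightarrow>
     (\<forall>a \<in> M. dm a \<le> n - 2 \<longrightarrow>
        (\<forall>u \<in> link_vertices M cle dm a. \<forall>v \<in> link_vertices M cle dm a. (link_adj M cle dm a)\<^sup>*\<^sup>* u v))"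
  unfolding link_connected_def link_vertices_def link_edges_def link_adj_def Let_def ..

lemma symp_link_adj: "symp (link_adj M cle dm a)"
  unfolding symp_def link_adj_def by blast

subsection \<open>Links in the coset multicomplex\<close>

lemma multicellsI: "J \<subseteq> {0..d} \<Longrightarrow> g \<in> carrier (Gdk d k) \<Longrightarrow> (J, mcls d k H J g) \<in> multicells d k H"
  by (auto simp: multicells_def)

lemma mc_leI:
  "I \<subseteq> J \<Longrightarrow> J \<subseteq> {0..d} \<Longrightarrow> g \<in> carrier (Gdk d k) \<Longrightarrow>
    mc_le d k H (I, mcls d k H I g) (J, mcls d k H J g)"
  by (auto simp: mc_le_def)

lemma card_hatJ: "J \<subseteq> {0..d} \<Longrightarrow> card (hatJ d J) = Suc d - card J"
  by (simp add: hatJ_def card_Diff_subset finite_subset)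

locale Gdk_subgroup =
  fixes d k :: nat and H :: "nat list set set"
  assumes k_pos: "k \<ge> 1" and subgroup_H: "subgroup H (Gdk d k)"
begin

sublocale group "Gdk d k"
  by (rule group_Gdk[OF k_pos])

lemma subgroup_Kgen_hatJ: "subgroup (Kgen d k (hatJ d J)) (Gdk d k)"
  by (rule subgroup_Kgen[OF k_pos]) (auto simp: hatJ_def)

lemma mcls_mult_left:
  "x \<in> Kgen d k (hatJ d J) \<Longrightarrow> g \<in> carrier (Gdk d k) \<Longrightarrow>
    mcls d k H J (x \<otimes>\<^bsub>Gdk d k\<^esub> g) = mcls d k H J g"
  unfolding mcls_eq_rcoset_orbit
  by (rule rcoset_orbit_mult_left[OF subgroup_Kgen_hatJ subgroup.subset[OF subgroup_H]])

lemma mcls_mult_right: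
  "g \<in> carrier (Gdk d k) \<Longrightarrow> h \<in> H \<Longrightarrow> mcls d k H J (g \<otimes>\<^bsub>Gdk d k\<^esub> h) = mcls d k H J g"
  unfolding mcls_eq_rcoset_orbit by (rule rcoset_orbit_mult_right[OF subgroup_H])

lemma mcls_eqD:
  "mcls d k H J g' = mcls d k H J g \<Longrightarrow> g' \<in> carrier (Gdk d k) \<Longrightarrow> g \<in> carrier (Gdk d k) \<Longrightarrow>
    \<exists>x \<in> Kgen d k (hatJ d J). \<exists>h \<in> H. g' = x \<otimes>\<^bsub>Gdk d k\<^esub> g \<otimes>\<^bsub>Gdk d k\<^esub> h"
  unfolding mcls_eq_rcoset_orbit by (rule rcoset_orbit_eqD[OF subgroup_Kgen_hatJ subgroup_H])

end

locale Xtilde_cell = Gdk_subgroup +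
  fixes J :: "nat set" and g :: "nat list set"
  assumes J_subset: "J \<subseteq> {0..d}" and g_carrier: "g \<in> carrier (Gdk d k)"
begin

abbreviation cell :: "nat set \<times> nat list set set set" where
  "cell \<equiv> (J, mcls d k H J g)"

abbreviation cell_link_vertices :: "(nat set \<times> nat list set set set) set" where
  "cell_link_vertices \<equiv> link_vertices (multicells d k H) (mc_le d k H) mdim cell"

abbreviation cell_link_adj :: "nat set \<times> nat list set set set \<Rightarrow> nat set \<times> nat list set set set \<Rightarrow> bool" where
  "cell_link_adj \<equiv> link_adj (multicells d k H) (mc_le d k H) mdim cell"

definition vertex :: "nat \<Rightarrow> nat list set \<Rightarrow> nat set \<times> nat list set set set" where
  "vertex i x = (insert i J, mcls d k H (insert i J) (x \<otimes>\<^bsub>Gdk d k\<^esub> g))"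

lemma finite_J: "finite J"
  using J_subset finite_subset by blast

lemma insert_hatJ_subset: "i \<in> hatJ d J \<Longrightarrow> insert i J \<subseteq> {0..d} \<and> i \<notin> J"
  using J_subset by (auto simp: hatJ_def)

lemma Kgen_hatJ_mult_g: "x \<in> Kgen d k (hatJ d J) \<Longrightarrow> x \<otimes>\<^bsub>Gdk d k\<^esub> g \<in> carrier (Gdk d k)"
  using g_carrier subgroup.mem_carrier[OF subgroup_Kgen_hatJ] by simp

lemma vertex_in_link:
  assumes "i \<in> hatJ d J" "x \<in> Kgen d k (hatJ d J)"
  shows "vertex i x \<in> cell_link_vertices"
proof -
  note iJ = insert_hatJ_subset[OF assms(1)] and xg = Kgen_hatJ_mult_g[OF assms(2)]
  have "mc_le d k H (J, mcls d k H J (x \<otimes>\<^bsub>Gdk d k\<^esub> g)) (vertex i x)"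
    unfolding vertex_def using iJ xg by (intro mc_leI) auto
  then show ?thesis
    unfolding link_vertices_def vertex_def mdim_def
    using multicellsI[OF conjunct1[OF iJ] xg] mcls_mult_left[OF assms(2) g_carrier] iJ finite_J
    by auto
qed

lemma vertex_adj:
  assumes "i \<in> hatJ d J" "j \<in> hatJ d J" "i \<noteq> j" "x \<in> Kgen d k (hatJ d J)"
  shows "cell_link_adj (vertex i x) (vertex j x)"
proof -
  define I where "I = insert i (insert j J)"
  note xg = Kgen_hatJ_mult_g[OF assms(4)]
  have I: "I \<subseteq> {0..d}" "card I = card J + 2"
    using insert_hatJ_subset[OF assms(1)] insert_hatJ_subset[OF assms(2)] assms(3) finite_J
    by (auto simp: I_def)
  let ?c = "(I, mcls d k H I (x \<otimes>\<^bsub>Gdk d k\<^esub> g))"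
  have "mc_le d k H (J, mcls d k H J (x \<otimes>\<^bsub>Gdk d k\<^esub> g)) ?c"
    using I xg by (intro mc_leI) (auto simp: I_def)
  then have "?c \<in> link_edges (multicells d k H) (mc_le d k H) mdim cell"
    unfolding link_edges_def mdim_def
    using multicellsI[OF I(1) xg] mcls_mult_left[OF assms(4) g_carrier] I(2) by auto
  moreover have "mc_le d k H (vertex i x) ?c" "mc_le d k H (vertex j x) ?c"
    unfolding vertex_def using I xg by (intro mc_leI; auto simp: I_def)+
  ultimately show ?thesis
    unfolding link_adj_def using vertex_in_link assms by blast
qed

lemma vertex_mult_left:
  assumes "z \<in> Kgen d k (hatJ d (insert j J))" "x \<in> carrier (Gdk d k)"
  shows "vertex j (z \<otimes>\<^bsub>Gdk d k\<^esub> x) = vertex j x"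
proof -
  have "z \<in> carrier (Gdk d k)"
    using assms(1) subgroup.mem_carrier[OF subgroup_Kgen_hatJ] by blast
  then show ?thesis
    unfolding vertex_def
    using mcls_mult_left[OF assms(1)] assms(2) g_carrier by (simp add: m_assoc)
qed

lemma link_vertexE:
  assumes "u \<in> cell_link_vertices"
  obtains i x where "i \<in> hatJ d J" "x \<in> Kgen d k (hatJ d J)" "u = vertex i x"
proof -
  from assms obtain J' g' where J': "J \<subseteq> J'" "J' \<subseteq> {0..d}" and g': "g' \<in> carrier (Gdk d k)"
    and u: "u = (J', mcls d k H J' g')" "mcls d k H J g' = mcls d k H J g"
    and "mdim u = mdim cell + 1"
    unfolding link_vertices_def mc_le_def by auto
  then have "card (J' - J) = 1"
    using finite_subset[OF J'(2)] finite_J by (simp add: mdim_def card_Diff_subset)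
  then obtain i where "J' - J = {i}"
    by (rule card_1_singletonE)
  with J' have i: "J' = insert i J" "i \<in> hatJ d J"
    by (auto simp: hatJ_def)
  obtain x h where x: "x \<in> Kgen d k (hatJ d J)" "h \<in> H" "g' = x \<otimes>\<^bsub>Gdk d k\<^esub> g \<otimes>\<^bsub>Gdk d k\<^esub> h"
    using mcls_eqD[OF u(2) g' g_carrier] by blast
  then have "u = vertex i x"
    unfolding u(1) vertex_def i(1) using mcls_mult_right Kgen_hatJ_mult_g by simp
  with i(2) x(1) that show thesis
    by blast
qed

lemma exists_other_in_hatJ:
  assumes "card J + 1 \<le> d"
  shows "\<exists>j \<in> hatJ d J. j \<noteq> l"
proof (rule ccontr)
  assume "\<not> ?thesis"
  then have "hatJ d J \<subseteq> {l}"
    by blast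
  then have "card (hatJ d J) \<le> 1"
    using card_mono[of "{l}" "hatJ d J"] by simp
  with card_hatJ[OF J_subset] assms show False
    by linarith
qed

lemma vertex_reach_mult_left:
  assumes "j \<in> hatJ d J" "z \<in> Kgen d k (hatJ d J)" "z \<in> Kgen d k (hatJ d (insert j J))"
    and "y \<in> Kgen d k (hatJ d J)" "\<forall>i \<in> hatJ d J. cell_link_adj\<^sup>*\<^sup>* (vertex i y) b"
  shows "\<forall>i \<in> hatJ d J. cell_link_adj\<^sup>*\<^sup>* (vertex i (z \<otimes>\<^bsub>Gdk d k\<^esub> y)) b"
proof
  fix i assume i: "i \<in> hatJ d J"
  have zy: "z \<otimes>\<^bsub>Gdk d k\<^esub> y \<in> Kgen d k (hatJ d J)"
    using assms(2,4) subgroup.m_closed[OF subgroup_Kgen_hatJ] by blast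
  have "cell_link_adj\<^sup>*\<^sup>* (vertex i (z \<otimes>\<^bsub>Gdk d k\<^esub> y)) (vertex j (z \<otimes>\<^bsub>Gdk d k\<^esub> y))"
    using vertex_adj[OF i assms(1) _ zy] by (cases "i = j") auto
  also have "vertex j (z \<otimes>\<^bsub>Gdk d k\<^esub> y) = vertex j y"
    using vertex_mult_left[OF assms(3)] assms(4) subgroup.mem_carrier[OF subgroup_Kgen_hatJ] by blast
  also have "cell_link_adj\<^sup>*\<^sup>* \<dots> b"
    using assms(1,5) by blast
  finally show "cell_link_adj\<^sup>*\<^sup>* (vertex i (z \<otimes>\<^bsub>Gdk d k\<^esub> y)) b" .
qed

lemma vertex_reach_base:
  assumes "card J + 1 \<le> d" "i0 \<in> hatJ d J" "x \<in> Kgen d k (hatJ d J)"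
  shows "\<forall>i \<in> hatJ d J. cell_link_adj\<^sup>*\<^sup>* (vertex i x) (vertex i0 \<one>\<^bsub>Gdk d k\<^esub>)"
proof -
  have gens: "alpha d k ` hatJ d J \<subseteq> carrier (Gdk d k)"
    using alpha_in_carrier by (auto simp: hatJ_def)
  have one_in_Kgen: "\<one>\<^bsub>Gdk d k\<^esub> \<in> Kgen d k (hatJ d J)"
    by (rule subgroup.one_closed[OF subgroup_Kgen_hatJ])
  have gen_other: "\<exists>j \<in> hatJ d J. alpha d k l \<in> Kgen d k (hatJ d (insert j J)) \<and>
      inv\<^bsub>Gdk d k\<^esub> alpha d k l \<in> Kgen d k (hatJ d (insert j J))" if "l \<in> hatJ d J" for l
  proof -
    obtain j where "j \<in> hatJ d J" "j \<noteq> l"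
      using exists_other_in_hatJ[OF assms(1)] by blast
    moreover from this that have "l \<in> hatJ d (insert j J)"
      by (simp add: hatJ_def)
    ultimately show ?thesis
      using alpha_in_Kgen by blast
  qed
  have step: "\<forall>i \<in> hatJ d J. cell_link_adj\<^sup>*\<^sup>* (vertex i (z \<otimes>\<^bsub>Gdk d k\<^esub> y)) (vertex i0 \<one>\<^bsub>Gdk d k\<^esub>)"
    if l: "l \<in> hatJ d J" and z: "z = alpha d k l \<or> z = inv\<^bsub>Gdk d k\<^esub> alpha d k l"
      and y: "y \<in> Kgen d k (hatJ d J)"
      and reach_y: "\<forall>i \<in> hatJ d J. cell_link_adj\<^sup>*\<^sup>* (vertex i y) (vertex i0 \<one>\<^bsub>Gdk d k\<^esub>)"
    for l z y
  proof -
    obtain j where "j \<in> hatJ d J" "z \<in> Kgen d k (hatJ d (insert j J))"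
      using gen_other[OF l] z by blast
    moreover have "z \<in> Kgen d k (hatJ d J)"
      using alpha_in_Kgen[OF l] z by blast
    ultimately show ?thesis
      using vertex_reach_mult_left y reach_y by blast
  qed
  from assms(3) gens show ?thesis
    unfolding Kgen_def
  proof (induction rule: generate_induct_left)
    case one
    have "cell_link_adj\<^sup>*\<^sup>* (vertex i \<one>\<^bsub>Gdk d k\<^esub>) (vertex i0 \<one>\<^bsub>Gdk d k\<^esub>)" if "i \<in> hatJ d J" for i
    proof (cases "i = i0")
      case False
      show ?thesis
        using vertex_adj[OF that assms(2) False one_in_Kgen] by (rule r_into_rtranclp)
    qed simp
    then show ?case
      by blast
  next
    case (gen s y)
    then show ?case
      using step unfolding Kgen_def by blast
  next
    case (inv_gen s y)
    then show ?case
      using step unfolding Kgen_def by blast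
  qed
qed

lemma cell_link_connected:
  assumes "card J + 1 \<le> d" "u \<in> cell_link_vertices" "v \<in> cell_link_vertices"
  shows "cell_link_adj\<^sup>*\<^sup>* u v"
proof -
  obtain i0 where i0: "i0 \<in> hatJ d J"
    using exists_other_in_hatJ[OF assms(1)] by blast
  have "cell_link_adj\<^sup>*\<^sup>* w (vertex i0 \<one>\<^bsub>Gdk d k\<^esub>)" if "w \<in> cell_link_vertices" for w
    using that by (elim link_vertexE) (use vertex_reach_base[OF assms(1) i0] in blast)
  then show ?thesis
    using assms(2,3) sympD[OF symp_rtranclp[OF symp_link_adj]] by (meson rtranclp_trans)
qed

end

theorem proposition7:
  fixes d k :: nat and H :: "nat list set set"
  assumes "d \<ge> 1" and "k \<ge> 1"
    and "subgroup H (Gdk d k)"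
  shows "Xtilde_link_connected d k H"
  unfolding Xtilde_link_connected_def link_connected_iff
proof (intro ballI impI)
  fix a u v
  assume "a \<in> multicells d k H" and dim: "mdim a \<le> int d - 2"
  then obtain J g where J: "J \<subseteq> {0..d}" "g \<in> carrier (Gdk d k)" "a = (J, mcls d k H J g)"
    unfolding multicells_def by blast
  interpret Xtilde_cell d k H J g
    by (rule Xtilde_cell.intro[OF Gdk_subgroup.intro[OF assms(2,3)] Xtilde_cell_axioms.intro[OF J(1,2)]])
  assume "u \<in> link_vertices (multicells d k H) (mc_le d k H) mdim a"
    and "v \<in> link_vertices (multicells d k H) (mc_le d k H) mdim a"
  moreover have "card J + 1 \<le> d"
    using dim J(3) by (simp add: mdim_def)
  ultimately show "(link_adj (multicells d k H) (mc_le d k H) mdim a)\<^sup>*\<^sup>* u v"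
    using cell_link_connected J(3) by blast
qed

end
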